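(* Let $G=(V,E)$ be a $k$-edge-connected multigraph with $k\ge1$, let $\bar x\in\mathbb{R}^E_{\ge0}$ be defined by $\bar x_e=\tfrac3k$ for all $e\in E$, and let $\emptyset\ne S\subseteq V$ satisfy $|\delta(S)|\le\tfrac43k$. Then for every partition $\Pi$ of $S$ into nonempty parts, $$\sum_{P\in\Pi}\bar x\big(\delta_{G[S]}(P)\big)\ \ge\ 2(|\Pi|-1),$$ i.e. the restriction of $\bar x$ to the edges of $G[S]$ lies in the dominant of the spanning tree polytope of $G[S]$.
   Context: $\delta(S)$ is the set of edges of $G$ with exactly one endpoint in $S$; $G[S]$ is the subgraph induced by $S$ and $\delta_{G[S]}(P)$ is the set of edges of $G[S]$ with exactly one endpoint in $P$. For $F\subseteq E$, $\bar x(F)=\sum_{e\in F}\bar x_e$. $k$-edge-connected means $|\delta(U)|\ge k$ for all $\emptyset\neq U\subsetneq V$. *)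

theory Defs
  imports Complex_Main "HOL-Library.Disjoint_Sets"
begin

text \<open>A finite multigraph is given by a finite vertex set V, a finite set E of edge
  identifiers, and an endpoint map ends :: 'e => 'v * 'v (parallel edges allowed).\<close>

definition multigraph :: "'v set \<Rightarrow> 'e set \<Rightarrow> ('e \<Rightarrow> 'v \<times> 'v) \<Rightarrow> bool" where
  "multigraph V E ends \<longleftrightarrow> finite V \<and> finite E \<and>
     (\<forall>e\<in>E. fst (ends e) \<in> V \<and> snd (ends e) \<in> V)"

definition cut :: "'e set \<Rightarrow> ('e \<Rightarrow> 'v \<times> 'v) \<Rightarrow> 'v set \<Rightarrow> 'e set" where
  "cut E ends S = {e\<in>E. (fst (ends e) \<in> S) \<noteq> (snd (ends e) \<in> S)}"

definition induced_edges :: "'e set \<Rightarrow> ('e \<Rightarrow> 'v \<times> 'v) \<Rightarrow> 'v set \<Rightarrow> 'e set" where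
  "induced_edges E ends S = {e\<in>E. fst (ends e) \<in> S \<and> snd (ends e) \<in> S}"

definition k_edge_connected :: "nat \<Rightarrow> 'v set \<Rightarrow> 'e set \<Rightarrow> ('e \<Rightarrow> 'v \<times> 'v) \<Rightarrow> bool" where
  "k_edge_connected k V E ends \<longleftrightarrow>
     (\<forall>U. U \<noteq> {} \<and> U \<subset> V \<longrightarrow> card (cut E ends U) \<ge> k)"

end

theory Submission
  imports Defs
begin

text \<open>Let \<open>\<Pi>\<close> have \<open>n \<ge> 2\<close> parts. Each part \<open>P\<close> is a proper nonempty subset of \<open>V\<close>, so
  \<open>|\<delta>(P)| \<ge> k\<close>. An edge of \<open>\<delta>(P)\<close> outside \<open>G[S]\<close> lies in \<open>\<delta>(S)\<close>, and having only one endpoint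
  in \<open>S\<close> it is counted for a single part. Hence \<open>\<Sum>\<^sub>P |\<delta>\<^sub>G\<^sub>[\<^sub>S\<^sub>](P)| \<ge> n k - |\<delta>(S)| \<ge> (n - 4/3) k\<close>,
  and multiplying by \<open>3/k\<close> gives \<open>3n - 4 \<ge> 2(n - 1)\<close>.\<close>

lemma cut_subset_induced_cut_Un_cut:
  assumes "P \<subseteq> S"
  shows "cut E ends P \<subseteq> cut (induced_edges E ends S) ends P \<union> (cut E ends P \<inter> cut E ends S)"
  using assms by (auto simp: cut_def induced_edges_def)

lemma cut_Int_cut_disjoint:
  assumes "P \<inter> Q = {}" "P \<subseteq> S" "Q \<subseteq> S"
  shows "(cut E ends P \<inter> cut E ends S) \<inter> (cut E ends Q \<inter> cut E ends S) = {}"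
  using assms by (auto simp: cut_def)

lemma sum_card_cut_Int_cut_le:
  assumes "finite E" and part: "partition_on S Parts"
  shows "(\<Sum>P\<in>Parts. card (cut E ends P \<inter> cut E ends S)) \<le> card (cut E ends S)"
proof (cases "finite Parts")
  case True
  have "(\<Sum>P\<in>Parts. card (cut E ends P \<inter> cut E ends S)) =
      card (\<Union>P\<in>Parts. cut E ends P \<inter> cut E ends S)"
  proof (rule card_UN_disjoint[symmetric])
    show "\<forall>P\<in>Parts. finite (cut E ends P \<inter> cut E ends S)"
      using \<open>finite E\<close> by (auto simp: cut_def)
    show "\<forall>P\<in>Parts. \<forall>Q\<in>Parts. P \<noteq> Q \<longrightarrow>
        (cut E ends P \<inter> cut E ends S) \<inter> (cut E ends Q \<inter> cut E ends S) = {}"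
    proof (intro ballI impI)
      fix P Q assume "P \<in> Parts" "Q \<in> Parts" "P \<noteq> Q"
      then show "(cut E ends P \<inter> cut E ends S) \<inter> (cut E ends Q \<inter> cut E ends S) = {}"
        using disjointD[OF partition_onD2[OF part]] partition_onD1[OF part]
        by (intro cut_Int_cut_disjoint) auto
    qed
  qed fact
  also have "\<dots> \<le> card (cut E ends S)"
    using \<open>finite E\<close> by (intro card_mono) (auto simp: cut_def)
  finally show ?thesis .
qed simp

lemma card_cut_partition_member_ge:
  assumes "k_edge_connected k V E ends" "S \<subseteq> V" and part: "partition_on S Parts"
    and "2 \<le> card Parts" "P \<in> Parts"
  shows "k \<le> card (cut E ends P)"
proof -
  have "card (Parts - {P}) \<noteq> 0"
    using assms(4,5) by (simp add: card_Diff_singleton_if)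
  then obtain Q where "Q \<in> Parts" "Q \<noteq> P"
    by (metis Diff_iff card.empty empty_iff equals0I singletonI)
  then have "P \<subseteq> V" "Q \<subseteq> V" "P \<inter> Q = {}" "Q \<noteq> {}" "P \<noteq> {}"
    using assms(2,5) partition_onD1[OF part] partition_onD3[OF part]
      disjointD[OF partition_onD2[OF part]] by auto
  then have "P \<subset> V" by blast
  with assms(1) \<open>P \<noteq> {}\<close> show ?thesis by (simp add: k_edge_connected_def)
qed

lemma card_mult_le_sum_card_induced_cut:
  assumes "finite E" "k_edge_connected k V E ends" "S \<subseteq> V"
    and part: "partition_on S Parts" and "2 \<le> card Parts"
  shows "card Parts * k \<le>
    (\<Sum>P\<in>Parts. card (cut (induced_edges E ends S) ends P)) + card (cut E ends S)"
proof -
  have "card (cut E ends P) \<le>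
      card (cut (induced_edges E ends S) ends P) + card (cut E ends P \<inter> cut E ends S)"
    if "P \<in> Parts" for P
  proof -
    have "finite (cut (induced_edges E ends S) ends P \<union> (cut E ends P \<inter> cut E ends S))"
      using \<open>finite E\<close> by (auto simp: cut_def induced_edges_def)
    moreover have "P \<subseteq> S"
      using partition_onD1[OF part] that by auto
    ultimately have "card (cut E ends P) \<le>
        card (cut (induced_edges E ends S) ends P \<union> (cut E ends P \<inter> cut E ends S))"
      by (intro card_mono cut_subset_induced_cut_Un_cut)
    then show ?thesis using card_Un_le order_trans by blast
  qed
  with card_cut_partition_member_ge[OF assms(2-5)]
  have "(\<Sum>P\<in>Parts. k) \<le> (\<Sum>P\<in>Parts.
      card (cut (induced_edges E ends S) ends P) + card (cut E ends P \<inter> cut E ends S))"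
    by (intro sum_mono) (meson order_trans)
  then show ?thesis
    using sum_card_cut_Int_cut_le[OF \<open>finite E\<close> part, of ends] by (simp add: sum.distrib)
qed

lemma sum_induced_cut_const:
  assumes "\<forall>e\<in>E. x e = c"
  shows "(\<Sum>e\<in>cut (induced_edges E ends S) ends P. x e) =
    of_nat (card (cut (induced_edges E ends S) ends P)) * c"
proof -
  have "cut (induced_edges E ends S) ends P \<subseteq> E"
    by (auto simp: cut_def induced_edges_def)
  then have "(\<Sum>e\<in>cut (induced_edges E ends S) ends P. x e) =
      (\<Sum>e\<in>cut (induced_edges E ends S) ends P. c)"
    using assms by (intro sum.cong) auto
  then show ?thesis by simp
qed

theorem mainTheorem7:
  fixes V :: "'v set" and E :: "'e set" and ends :: "'e \<Rightarrow> 'v \<times> 'v"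
    and k :: nat and xbar :: "'e \<Rightarrow> real" and S :: "'v set"
  assumes "multigraph V E ends"
    and "k \<ge> 1"
    and "k_edge_connected k V E ends"
    and "\<forall>e\<in>E. xbar e = 3 / real k"
    and "S \<noteq> {}" and "S \<subseteq> V"
    and "real (card (cut E ends S)) \<le> 4 / 3 * real k"
  shows "\<forall>Parts. partition_on S Parts \<longrightarrow>
           (\<Sum>P\<in>Parts. (\<Sum>e\<in>cut (induced_edges E ends S) ends P. xbar e))
             \<ge> 2 * (real (card Parts) - 1)"
proof (intro allI impI)
  fix Parts assume part: "partition_on S Parts"
  define s where "s = (\<Sum>P\<in>Parts. card (cut (induced_edges E ends S) ends P))"
  have weight: "(\<Sum>P\<in>Parts. (\<Sum>e\<in>cut (induced_edges E ends S) ends P. xbar e)) = s * (3 / real k)"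
    unfolding s_def of_nat_sum sum_distrib_right
    using sum_induced_cut_const[OF assms(4), of ends S] by simp
  show "(\<Sum>P\<in>Parts. (\<Sum>e\<in>cut (induced_edges E ends S) ends P. xbar e)) \<ge> 2 * (real (card Parts) - 1)"
  proof (cases "2 \<le> card Parts")
    case True
    have "finite E" using assms(1) by (simp add: multigraph_def)
    from card_mult_le_sum_card_induced_cut[OF this assms(3,6) part True]
    have "real (card Parts) * k \<le> s + card (cut E ends S)"
      unfolding s_def by (metis of_nat_add of_nat_mono of_nat_mult)
    then have "3 * real (card Parts) - 4 \<le> s * (3 / real k)"
      using assms(2,7) by (simp add: field_simps)
    with True weight show ?thesis by simp
  next
    case False
    then show ?thesis using weight by (simp add: order_trans[of _ 0])
  qed
qed

end
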